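(* Let $n \ge 1$, $F = \{\mathrm{AND}, \mathrm{OR}\}$, $L = \{x_1, \ldots, x_n\}$ and $\ell \ge n$. The expected runtime $E[T]$ of RLS-GP (with HVL-Prime with subtree deletion as mutation operator, tree size limit $\ell$, and the complete truth table as fitness) on the target $\mathrm{AND}_n$, and likewise on the target $\mathrm{OR}_n$, is $\Omega(n \log n)$.
   Context: Programs are finite rooted binary trees (the empty tree is allowed) whose internal nodes are labelled by binary Boolean functions from $F$ and whose leaves are labelled by literals from $L$; a program computes a Boolean function of $(x_1,\dots,x_n)$ in the obvious way. $\mathrm{AND}_n(x) = x_1 \wedge \dots \wedge x_n$ and $\mathrm{OR}_n(x) = x_1 \vee \dots \vee x_n$. The fitness (to be minimised) of a program $X$ for target $h$ is $f(X) = |\{x \in \{0,1\}^n : X(x) \ne h(x)\}|$. LeafCount$(X)$ is the number of leaves of $X$. HVL-Prime with subtree deletion, applied to a tree $X$: choose $op \in \{\mathrm{INS}, \mathrm{DEL}, \mathrm{SUB}\}$, a literal $l \in L$ and a function $g \in F$, independently and uniformly at random. If $X$ is empty, the result is the tree consisting of the single leaf $l$. Otherwise: if $op = \mathrm{INS}$, choose a node $x$ of $X$ uniformly at random and replace it by a new node labelled $g$ whose two children are the subtree rooted at $x$ and a new leaf $l$, in uniformly random order; if $op = \mathrm{DEL}$, choose a node $x$ of $X$ (leaf or internal) uniformly at random and replace the parent of $x$ by the sibling of $x$ (removing the subtree rooted at $x$ together with its parent); if $op = \mathrm{SUB}$, choose a leaf of $X$ uniformly at random and replace it by $l$. RLS-GP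 with tree size limit $\ell$: start with the empty tree $X$; in each iteration $t = 1, 2, \ldots$ let $X' := $ HVL-Prime$(X)$, and if LeafCount$(X') \le \ell$ and $f(X') \le f(X)$ then set $X := X'$. The runtime $T$ is the number of iterations until the current tree computes exactly the target function (fitness $0$). Asymptotics are as $n \to \infty$. *)

theory Defs
  imports "HOL-Probability.Probability"
begin

datatype gate = AND | OR

text \<open>Non-empty trees; leaf \<open>Leaf i\<close> is the literal x_(i+1), i < n.
  A program is a \<open>tree option\<close>; \<open>None\<close> is the empty tree.\<close>
datatype tree = Leaf nat | Node gate tree tree

type_synonym prog = "tree option"

fun eval_gate :: "gate \<Rightarrow> bool \<Rightarrow> bool \<Rightarrow> bool" where
  "eval_gate AND a b = (a \<and> b)"
| "eval_gate OR a b = (a \<or> b)"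

fun eval_tree :: "tree \<Rightarrow> bool list \<Rightarrow> bool" where
  "eval_tree (Leaf i) x = x ! i"
| "eval_tree (Node g a b) x = eval_gate g (eval_tree a x) (eval_tree b x)"

text \<open>The empty program computes no value (it disagrees with the target everywhere).\<close>
definition eval_prog :: "prog \<Rightarrow> bool list \<Rightarrow> bool option" where
  "eval_prog X x = map_option (\<lambda>t. eval_tree t x) X"

definition inputs :: "nat \<Rightarrow> bool list set" where
  "inputs n = {x. length x = n}"

definition fitness :: "nat \<Rightarrow> (bool list \<Rightarrow> bool) \<Rightarrow> prog \<Rightarrow> nat" where
  "fitness n h X = card {x \<in> inputs n. eval_prog X x \<noteq> Some (h x)}"

definition AND_n :: "nat \<Rightarrow> bool list \<Rightarrow> bool" where
  "AND_n n x = (\<forall>i<n. x ! i)"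

definition OR_n :: "nat \<Rightarrow> bool list \<Rightarrow> bool" where
  "OR_n n x = (\<exists>i<n. x ! i)"

fun leaves :: "tree \<Rightarrow> nat" where
  "leaves (Leaf i) = 1"
| "leaves (Node g a b) = leaves a + leaves b"

definition leaf_count :: "prog \<Rightarrow> nat" where
  "leaf_count X = (case X of None \<Rightarrow> 0 | Some t \<Rightarrow> leaves t)"

section \<open>Positions (paths from the root; False = left, True = right)\<close>

fun positions :: "tree \<Rightarrow> bool list set" where
  "positions (Leaf i) = {[]}"
| "positions (Node g a b) = insert [] (Cons False ` positions a \<union> Cons True ` positions b)"

fun leaf_positions :: "tree \<Rightarrow> bool list set" where
  "leaf_positions (Leaf i) = {[]}"
| "leaf_positions (Node g a b) = Cons False ` leaf_positions a \<union> Cons True ` leaf_positions b"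

fun subtree :: "tree \<Rightarrow> bool list \<Rightarrow> tree" where
  "subtree t [] = t"
| "subtree (Node g a b) (False # p) = subtree a p"
| "subtree (Node g a b) (True # p) = subtree b p"
| "subtree (Leaf i) (_ # p) = Leaf i"

fun replace :: "tree \<Rightarrow> bool list \<Rightarrow> tree \<Rightarrow> tree" where
  "replace t [] s = s"
| "replace (Node g a b) (False # p) s = Node g (replace a p s) b"
| "replace (Node g a b) (True # p) s = Node g a (replace b p s)"
| "replace (Leaf i) (_ # p) s = Leaf i"

datatype mop = INS | DEL | SUB

text \<open>Deleting the node at position p: if p is the root (no parent) the result
  is the empty tree; otherwise the parent of p is replaced by the sibling of p.\<close>
definition delete_at :: "tree \<Rightarrow> bool list \<Rightarrow> prog" where
  "delete_at t p = (if p = [] then None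
     else Some (replace t (butlast p) (subtree t (butlast p @ [\<not> last p]))))"

definition hvl_prime :: "nat \<Rightarrow> prog \<Rightarrow> prog pmf" where
  "hvl_prime n X =
     do { op \<leftarrow> pmf_of_set (UNIV :: mop set);
          l \<leftarrow> pmf_of_set {..<n};
          g \<leftarrow> pmf_of_set (UNIV :: gate set);
          (case X of
             None \<Rightarrow> return_pmf (Some (Leaf l))
           | Some t \<Rightarrow>
               (case op of
                  INS \<Rightarrow> do { p \<leftarrow> pmf_of_set (positions t);
                              b \<leftarrow> pmf_of_set (UNIV :: bool set);
                              return_pmf (Some (replace t p
                                 (if b then Node g (subtree t p) (Leaf l)
                                       else Node g (Leaf l) (subtree t p)))) }
                | DEL \<Rightarrow> map_pmf (delete_at t) (pmf_of_set (positions t))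
                | SUB \<Rightarrow> map_pmf (\<lambda>p. Some (replace t p (Leaf l)))
                                 (pmf_of_set (leaf_positions t)))) }"

definition rls_step :: "nat \<Rightarrow> nat \<Rightarrow> (bool list \<Rightarrow> bool) \<Rightarrow> prog \<Rightarrow> prog pmf" where
  "rls_step n size_limit h X =
     map_pmf (\<lambda>X'. if leaf_count X' \<le> size_limit \<and> fitness n h X' \<le> fitness n h X then X' else X)
             (hvl_prime n X)"

primrec trajectory :: "nat \<Rightarrow> nat \<Rightarrow> (bool list \<Rightarrow> bool) \<Rightarrow> nat \<Rightarrow> prog list pmf" where
  "trajectory n size_limit h 0 = return_pmf [None]"
| "trajectory n size_limit h (Suc t) =
     do { xs \<leftarrow> trajectory n size_limit h t;
          y \<leftarrow> rls_step n size_limit h (last xs);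
          return_pmf (xs @ [y]) }"

text \<open>T = least t such that X_t has fitness 0; then P(T > t) is the probability that
  none of X_0..X_t has fitness 0, and E[T] = sum over t of P(T > t) (in ennreal;
  infinite if T is not integrable).\<close>
definition expected_runtime :: "nat \<Rightarrow> nat \<Rightarrow> (bool list \<Rightarrow> bool) \<Rightarrow> ennreal" where
  "expected_runtime n size_limit h =
     (\<Sum>t. ennreal (measure_pmf.prob (trajectory n size_limit h t)
                       {xs. \<forall>X\<in>set xs. fitness n h X \<noteq> 0}))"

end

theory Submission
  imports Defs "HOL-Analysis.Harmonic_Numbers"
begin

(* A program of fitness 0 on AND_n or OR_n must contain every variable, while one mutation
   adds at most one literal, drawn uniformly from the n variables.  So if k variables are still
   missing, a step shrinks the missing set with probability at most k/n, and the
   coupon-collector potential n H_k decreases in expectation by at most 1 per step.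
   Let Phi_t be the expected potential at time t on the event T > t.  Then Phi_0 = n H_n,
   Phi_t >= n H_n - (sum of P(T > s) for s < t) and Phi_t <= n H_n P(T > t).  Either
   P(T > t) < 1/2 for some t, and the first t terms of E[T] = sum of P(T > s) add up to at
   least n H_n / 2, or all terms are at least 1/2; in both cases E[T] >= n H_n / 2 >= n ln n / 2. *)

fun lits :: "tree \<Rightarrow> nat set" where
  "lits (Leaf i) = {i}"
| "lits (Node g a b) = lits a \<union> lits b"

definition prog_lits :: "prog \<Rightarrow> nat set" where
  "prog_lits X = (case X of None \<Rightarrow> {} | Some t \<Rightarrow> lits t)"

definition missing_lits :: "nat \<Rightarrow> prog \<Rightarrow> nat set" where
  "missing_lits n X = {..<n} - prog_lits X"

lemma finite_missing_lits [simp]: "finite (missing_lits n X)"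
  by (simp add: missing_lits_def)

lemma lits_subtree: "lits (subtree t p) \<subseteq> lits t"
  by (induction t p rule: subtree.induct) auto

lemma lits_replace: "lits (replace t p s) \<subseteq> lits t \<union> lits s"
  by (induction t p s rule: replace.induct) auto

lemma prog_lits_delete_at: "prog_lits (delete_at t p) \<subseteq> lits t"
  using lits_replace[of t "butlast p"] lits_subtree[of t]
  unfolding delete_at_def prog_lits_def by auto

definition mutate :: "prog \<Rightarrow> mop \<Rightarrow> nat \<Rightarrow> gate \<Rightarrow> prog pmf" where
  "mutate X op l g = (case X of
       None \<Rightarrow> return_pmf (Some (Leaf l))
     | Some t \<Rightarrow>
         (case op of
            INS \<Rightarrow> do { p \<leftarrow> pmf_of_set (positions t);
                        b \<leftarrow> pmf_of_set (UNIV :: bool set);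
                        return_pmf (Some (replace t p
                           (if b then Node g (subtree t p) (Leaf l)
                                 else Node g (Leaf l) (subtree t p)))) }
          | DEL \<Rightarrow> map_pmf (delete_at t) (pmf_of_set (positions t))
          | SUB \<Rightarrow> map_pmf (\<lambda>p. Some (replace t p (Leaf l)))
                           (pmf_of_set (leaf_positions t))))"

lemma hvl_prime_literal_first:
  "hvl_prime n X = do { l \<leftarrow> pmf_of_set {..<n};
                        op \<leftarrow> pmf_of_set (UNIV :: mop set);
                        g \<leftarrow> pmf_of_set (UNIV :: gate set);
                        mutate X op l g }"
  unfolding hvl_prime_def mutate_def by (rule bind_commute_pmf)

lemma prog_lits_mutate:
  assumes "Y \<in> set_pmf (mutate X op l g)"
  shows "prog_lits Y \<subseteq> prog_lits X \<union> {l}"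
proof (cases X)
  case None
  then show ?thesis using assms by (simp add: mutate_def prog_lits_def)
next
  case (Some t)
  have "lits (replace t p (Node g (subtree t p) (Leaf l))) \<subseteq> lits t \<union> {l}"
   and "lits (replace t p (Node g (Leaf l) (subtree t p))) \<subseteq> lits t \<union> {l}"
   and "lits (replace t p (Leaf l)) \<subseteq> lits t \<union> {l}" for p
    using lits_replace[of t p] lits_subtree[of t p] by fastforce+
  with assms Some prog_lits_delete_at[of t] show ?thesis
    by (cases op) (fastforce simp: mutate_def prog_lits_def split: if_splits)+
qed

lemma measure_bind_pmf_le:
  assumes "\<And>x y. x \<in> set_pmf M \<Longrightarrow> y \<in> set_pmf (N x) \<Longrightarrow> y \<in> D \<Longrightarrow> x \<in> B"
  shows "measure_pmf.prob (bind_pmf M N) D \<le> measure_pmf.prob M B"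
proof -
  have "emeasure (bind_pmf M N) D = (\<integral>\<^sup>+x. emeasure (N x) D \<partial>M)"
    by simp
  also have "\<dots> \<le> (\<integral>\<^sup>+x. indicator B x \<partial>M)"
  proof (rule nn_integral_mono_AE, rule AE_pmfI)
    fix x assume x: "x \<in> set_pmf M"
    show "emeasure (N x) D \<le> indicator B x"
    proof (cases "x \<in> B")
      case True
      then show ?thesis by (simp add: measure_pmf.emeasure_le_1)
    next
      case False
      with assms x have "D \<inter> set_pmf (N x) = {}" by blast
      then show ?thesis by (metis emeasure_Int_set_pmf emeasure_empty le_zero_eq zero_le)
    qed
  qed
  also have "\<dots> = emeasure M B"
    by simp
  finally show ?thesis
    by (simp add: measure_pmf.emeasure_eq_measure)
qed

lemma prob_hvl_prime_new_lit:
  assumes "0 < n"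
  shows "measure_pmf.prob (hvl_prime n X) {Y. \<not> missing_lits n X \<subseteq> missing_lits n Y}
           \<le> card (missing_lits n X) / n"
proof -
  have "measure_pmf.prob (hvl_prime n X) {Y. \<not> missing_lits n X \<subseteq> missing_lits n Y}
          \<le> measure_pmf.prob (pmf_of_set {..<n}) (missing_lits n X)"
    unfolding hvl_prime_literal_first
    by (rule measure_bind_pmf_le) (use prog_lits_mutate in \<open>fastforce simp: missing_lits_def\<close>)
  also have "\<dots> = card (missing_lits n X) / n"
    using assms by (subst measure_pmf_of_set) (auto simp: missing_lits_def Int_absorb1)
  finally show ?thesis .
qed

lemma missing_lits_rls_step:
  assumes "Y \<in> set_pmf (rls_step n size_limit h X)"
  obtains l where "missing_lits n X - {l} \<subseteq> missing_lits n Y"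
proof -
  have "Y = X \<or> Y \<in> set_pmf (hvl_prime n X)"
    using assms by (auto simp: rls_step_def split: if_splits)
  then show ?thesis
  proof
    assume "Y = X"
    then show ?thesis using that by blast
  next
    assume "Y \<in> set_pmf (hvl_prime n X)"
    then obtain l op g where "Y \<in> set_pmf (mutate X op l g)"
      by (auto simp: hvl_prime_literal_first)
    from prog_lits_mutate[OF this] show ?thesis
      using that by (auto simp: missing_lits_def)
  qed
qed

lemma prob_rls_step_new_lit:
  assumes "0 < n"
  shows "measure_pmf.prob (rls_step n size_limit h X) {Y. \<not> missing_lits n X \<subseteq> missing_lits n Y}
           \<le> card (missing_lits n X) / n"
proof -
  let ?D = "{Y. \<not> missing_lits n X \<subseteq> missing_lits n Y}"
  have "measure_pmf.prob (rls_step n size_limit h X) ?D \<le> measure_pmf.prob (hvl_prime n X) ?D"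
    unfolding rls_step_def measure_map_pmf
    by (rule measure_pmf.finite_measure_mono) auto
  also have "\<dots> \<le> card (missing_lits n X) / n"
    by (rule prob_hvl_prime_new_lit[OF assms])
  finally show ?thesis .
qed

lemma harm_card_le_remove_one:
  assumes "finite B" "A - {l} \<subseteq> B" "\<not> A \<subseteq> B"
  shows "harm (card A) \<le> harm (card B) + 1 / real (card A)"
proof -
  have "A \<subseteq> insert l B"
    using assms(2) by blast
  then have "finite A"
    using assms(1) by (rule finite_subset[OF _ finite_insert[THEN iffD2]])
  moreover have "A \<noteq> {}"
    using assms(3) by blast
  ultimately obtain k where k: "card A = Suc k"
    by (metis card_eq_0_iff not0_implies_Suc)
  have "k \<le> card (A - {l})"
    using k \<open>finite A\<close> by (simp add: card_Diff_singleton_if)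
  also have "\<dots> \<le> card B"
    by (intro card_mono assms(1,2))
  finally have "harm k \<le> (harm (card B) :: real)"
    by (rule harm_mono)
  then show ?thesis
    using k by (simp add: harm_Suc divide_inverse)
qed

(* n H_k is the expected time to collect k specific coupons out of n drawn uniformly. *)
definition coupon_potential :: "nat \<Rightarrow> prog \<Rightarrow> real" where
  "coupon_potential n X = real n * harm (card (missing_lits n X))"

lemma coupon_potential_nonneg: "0 \<le> coupon_potential n X"
  by (simp add: coupon_potential_def harm_nonneg)

lemma coupon_potential_le: "coupon_potential n X \<le> real n * harm n"
proof -
  have "card (missing_lits n X) \<le> n"
    unfolding missing_lits_def by (metis Diff_subset card_lessThan card_mono finite_lessThan)
  then show ?thesis
    unfolding coupon_potential_def by (intro mult_left_mono harm_mono) auto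
qed

lemma coupon_potential_eq_0: "missing_lits n X = {} \<Longrightarrow> coupon_potential n X = 0"
  by (simp add: coupon_potential_def harm_altdef)

lemma coupon_potential_step:
  assumes "missing_lits n X - {l} \<subseteq> missing_lits n Y" "missing_lits n X \<noteq> {}"
  shows "ennreal (coupon_potential n X)
           \<le> ennreal (coupon_potential n Y)
             + ennreal (n / card (missing_lits n X))
               * indicator {Y. \<not> missing_lits n X \<subseteq> missing_lits n Y} Y"
proof (cases "missing_lits n X \<subseteq> missing_lits n Y")
  case True
  then have "card (missing_lits n X) \<le> card (missing_lits n Y)"
    by (intro card_mono) simp
  then have "coupon_potential n X \<le> coupon_potential n Y"
    unfolding coupon_potential_def by (intro mult_left_mono harm_mono) auto
  with True show ?thesis
    by (simp add: ennreal_leI)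
next
  case False
  have "harm (card (missing_lits n X))
          \<le> harm (card (missing_lits n Y)) + 1 / real (card (missing_lits n X))"
    by (rule harm_card_le_remove_one[OF _ assms(1) False]) simp
  then have "real n * harm (card (missing_lits n X))
               \<le> real n * (harm (card (missing_lits n Y)) + 1 / real (card (missing_lits n X)))"
    by (rule mult_left_mono) simp
  then have "coupon_potential n X \<le> coupon_potential n Y + n / card (missing_lits n X)"
    by (simp add: coupon_potential_def distrib_left)
  with False coupon_potential_nonneg[of n Y] show ?thesis
    by (simp add: ennreal_plus[symmetric] ennreal_leI del: ennreal_plus)
qed

lemma coupon_potential_drift:
  "ennreal (coupon_potential n X)
     \<le> (\<integral>\<^sup>+Y. ennreal (coupon_potential n Y) \<partial>rls_step n size_limit h X) + 1"
proof (cases "missing_lits n X = {}")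
  case True
  then show ?thesis
    by (simp add: coupon_potential_eq_0)
next
  case False
  then have n: "0 < n"
    by (auto simp: missing_lits_def)
  let ?R = "rls_step n size_limit h X"
  let ?D = "{Y. \<not> missing_lits n X \<subseteq> missing_lits n Y}"
  let ?c = "real n / card (missing_lits n X)"
  have "ennreal (coupon_potential n X) = (\<integral>\<^sup>+Y. ennreal (coupon_potential n X) \<partial>?R)"
    by (simp add: measure_pmf.emeasure_space_1)
  also have "\<dots> \<le> (\<integral>\<^sup>+Y. ennreal (coupon_potential n Y) + ennreal ?c * indicator ?D Y \<partial>?R)"
  proof (rule nn_integral_mono_AE, rule AE_pmfI)
    fix Y assume "Y \<in> set_pmf ?R"
    then obtain l where "missing_lits n X - {l} \<subseteq> missing_lits n Y"
      by (rule missing_lits_rls_step)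
    from coupon_potential_step[OF this False]
    show "ennreal (coupon_potential n X) \<le> ennreal (coupon_potential n Y) + ennreal ?c * indicator ?D Y" .
  qed
  also have "\<dots> = (\<integral>\<^sup>+Y. ennreal (coupon_potential n Y) \<partial>?R) + ennreal ?c * emeasure ?R ?D"
    by (subst nn_integral_add) (auto simp: nn_integral_cmult_indicator)
  also have "ennreal ?c * emeasure ?R ?D \<le> ennreal ?c * ennreal (real (card (missing_lits n X)) / real n)"
    using prob_rls_step_new_lit[OF n]
    by (intro mult_left_mono) (simp_all add: measure_pmf.emeasure_eq_measure)
  also have "\<dots> = 1"
    using False n by (simp add: ennreal_mult'[symmetric] card_gt_0_iff)
  finally show ?thesis
    by (simp add: add_left_mono)
qed

definition unsolved :: "nat \<Rightarrow> (bool list \<Rightarrow> bool) \<Rightarrow> prog list set" where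
  "unsolved n h = {xs. \<forall>X\<in>set xs. fitness n h X \<noteq> 0}"

definition unsolved_potential :: "nat \<Rightarrow> nat \<Rightarrow> (bool list \<Rightarrow> bool) \<Rightarrow> nat \<Rightarrow> ennreal" where
  "unsolved_potential n size_limit h t =
     (\<integral>\<^sup>+xs. ennreal (coupon_potential n (last xs)) * indicator (unsolved n h) xs
        \<partial>trajectory n size_limit h t)"

lemma unsolved_potential_le:
  "unsolved_potential n size_limit h t
     \<le> ennreal (real n * harm n) * emeasure (trajectory n size_limit h t) (unsolved n h)"
proof -
  have "unsolved_potential n size_limit h t
          \<le> (\<integral>\<^sup>+xs. ennreal (real n * harm n) * indicator (unsolved n h) xs \<partial>trajectory n size_limit h t)"
    unfolding unsolved_potential_def
    by (intro nn_integral_mono mult_right_mono ennreal_leI coupon_potential_le) simp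
  then show ?thesis
    by (simp add: nn_integral_cmult_indicator)
qed

context
  fixes n size_limit :: nat and h :: "bool list \<Rightarrow> bool"
  assumes solution_has_all_lits: "\<And>X. fitness n h X = 0 \<Longrightarrow> missing_lits n X = {}"
begin

lemma unsolved_potential_Suc:
  "unsolved_potential n size_limit h t
     \<le> unsolved_potential n size_limit h (Suc t) + emeasure (trajectory n size_limit h t) (unsolved n h)"
proof -
  let ?T = "trajectory n size_limit h t"
  let ?R = "\<lambda>xs. rls_step n size_limit h (last xs)"
  let ?A = "unsolved n h"
  \<comment> \<open>Solved programs have potential 0, so the newest program can be dropped from the event.\<close>
  have snoc: "ennreal (coupon_potential n Y) * indicator ?A (xs @ [Y])
                = ennreal (coupon_potential n Y) * indicator ?A xs" for xs Y
  proof (cases "fitness n h Y = 0")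
    case True
    then show ?thesis
      by (simp add: coupon_potential_eq_0 solution_has_all_lits)
  next
    case False
    then show ?thesis
      by (simp add: unsolved_def indicator_def)
  qed
  have "unsolved_potential n size_limit h t
          \<le> (\<integral>\<^sup>+xs. ((\<integral>\<^sup>+Y. ennreal (coupon_potential n Y) \<partial>?R xs) + 1) * indicator ?A xs \<partial>?T)"
    unfolding unsolved_potential_def
    by (intro nn_integral_mono mult_right_mono coupon_potential_drift) simp
  also have "\<dots> = (\<integral>\<^sup>+xs. (\<integral>\<^sup>+Y. ennreal (coupon_potential n Y) \<partial>?R xs) * indicator ?A xs
                         + indicator ?A xs \<partial>?T)"
    by (simp add: distrib_right)
  also have "\<dots> = (\<integral>\<^sup>+xs. (\<integral>\<^sup>+Y. ennreal (coupon_potential n Y) \<partial>?R xs) * indicator ?A xs \<partial>?T)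
                    + emeasure ?T ?A"
    by (subst nn_integral_add) auto
  also have "(\<integral>\<^sup>+xs. (\<integral>\<^sup>+Y. ennreal (coupon_potential n Y) \<partial>?R xs) * indicator ?A xs \<partial>?T)
               = unsolved_potential n size_limit h (Suc t)"
    unfolding unsolved_potential_def by (simp add: snoc nn_integral_multc)
  finally show ?thesis .
qed

lemma unsolved_potential_0:
  assumes "0 < n"
  shows "unsolved_potential n size_limit h 0 = ennreal (real n * harm n)"
proof -
  have "missing_lits n None = {..<n}"
    by (simp add: missing_lits_def prog_lits_def)
  moreover from this have "[None] \<in> unsolved n h"
    using assms solution_has_all_lits by (auto simp: unsolved_def)
  ultimately show ?thesis
    by (simp add: unsolved_potential_def coupon_potential_def)
qed

lemma unsolved_potential_ge:
  assumes "0 < n"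
  shows "ennreal (real n * harm n)
           \<le> unsolved_potential n size_limit h t
             + (\<Sum>s<t. emeasure (trajectory n size_limit h s) (unsolved n h))"
proof (induction t)
  case 0
  show ?case
    by (simp add: unsolved_potential_0[OF assms])
next
  case (Suc t)
  note Suc.IH
  also have "unsolved_potential n size_limit h t
               + (\<Sum>s<t. emeasure (trajectory n size_limit h s) (unsolved n h))
             \<le> unsolved_potential n size_limit h (Suc t)
               + emeasure (trajectory n size_limit h t) (unsolved n h)
               + (\<Sum>s<t. emeasure (trajectory n size_limit h s) (unsolved n h))"
    by (intro add_right_mono unsolved_potential_Suc)
  finally show ?case
    by (simp add: ac_simps)
qed

end

lemma suminf_ge_half_of_potential_bound:
  fixes p :: "nat \<Rightarrow> real"
  assumes p: "\<And>t. 0 \<le> p t" and "0 \<le> G"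
    and bound: "\<And>t. G \<le> G * p t + (\<Sum>s<t. p s)"
  shows "ennreal (G / 2) \<le> (\<Sum>t. ennreal (p t))"
proof -
  have "\<exists>t. G / 2 \<le> (\<Sum>s<t. p s)"
  proof (cases "\<exists>t. p t < 1/2")
    case True
    then obtain t where "p t < 1/2"
      by blast
    then have "G * p t \<le> G / 2"
      using mult_left_mono[of "p t" "1/2" G] \<open>0 \<le> G\<close> by simp
    then show ?thesis
      using bound[of t] by (intro exI[of _ t]) linarith
  next
    case False
    then have "G / 2 \<le> (\<Sum>s<nat \<lceil>G\<rceil>. p s)"
      using sum_mono[of "{..<nat \<lceil>G\<rceil>}" "\<lambda>_. 1/2" p] by (simp add: not_less) linarith
    then show ?thesis ..
  qed
  then obtain t where "G / 2 \<le> (\<Sum>s<t. p s)"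
    by blast
  then have "ennreal (G / 2) \<le> (\<Sum>s<t. ennreal (p s))"
    using p by (simp add: ennreal_leI)
  also have "\<dots> \<le> (\<Sum>t. ennreal (p t))"
    by (intro sum_le_suminf) auto
  finally show ?thesis .
qed

lemma expected_runtime_ge_half_harm:
  assumes "0 < n" and solution_has_all_lits: "\<And>X. fitness n h X = 0 \<Longrightarrow> missing_lits n X = {}"
  shows "ennreal (real n * harm n / 2) \<le> expected_runtime n size_limit h"
proof -
  define p where "p t = measure_pmf.prob (trajectory n size_limit h t) (unsolved n h)" for t
  have bound: "real n * harm n \<le> real n * harm n * p t + (\<Sum>s<t. p s)" for t
  proof -
    let ?E = "\<lambda>s. emeasure (trajectory n size_limit h s) (unsolved n h)"
    have "ennreal (real n * harm n) \<le> unsolved_potential n size_limit h t + (\<Sum>s<t. ?E s)"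
      by (rule unsolved_potential_ge[OF solution_has_all_lits assms(1)])
    also have "\<dots> \<le> ennreal (real n * harm n) * ?E t + (\<Sum>s<t. ?E s)"
      by (intro add_right_mono unsolved_potential_le)
    also have "\<dots> = ennreal (real n * harm n * p t + (\<Sum>s<t. p s))"
      using harm_nonneg[where 'a=real, of n]
      by (simp add: p_def measure_pmf.emeasure_eq_measure ennreal_mult'' sum_nonneg)
    finally have "ennreal (real n * harm n) \<le> ennreal (real n * harm n * p t + (\<Sum>s<t. p s))" .
    moreover have "0 \<le> real n * harm n * p t + (\<Sum>s<t. p s)"
      by (simp add: p_def harm_nonneg sum_nonneg)
    ultimately show ?thesis
      by simp
  qed
  have "ennreal (real n * harm n / 2) \<le> (\<Sum>t. ennreal (p t))"
    by (rule suminf_ge_half_of_potential_bound[OF _ _ bound]) (simp_all add: p_def harm_nonneg)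
  then show ?thesis
    by (simp add: expected_runtime_def p_def unsolved_def)
qed

lemma fitness_eq_0_iff:
  "fitness n h X = 0 \<longleftrightarrow> (\<forall>x. length x = n \<longrightarrow> eval_prog X x = Some (h x))"
proof -
  have "finite (inputs n)"
    using finite_lists_length_eq[of "UNIV :: bool set" n] by (simp add: inputs_def)
  then show ?thesis
    by (auto simp: fitness_def inputs_def)
qed

lemma eval_tree_update: "i \<notin> lits t \<Longrightarrow> eval_tree t (x[i := v]) = eval_tree t x"
  by (induction t) auto

lemma solution_contains_relevant_variable:
  assumes "fitness n h X = 0" "length x = n" "i < n" "h (x[i := v]) \<noteq> h x"
  shows "i \<notin> missing_lits n X"
proof
  assume "i \<in> missing_lits n X"
  then have "eval_prog X (x[i := v]) = eval_prog X x"
    by (cases X) (auto simp: missing_lits_def prog_lits_def eval_prog_def eval_tree_update)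
  with assms show False
    unfolding fitness_eq_0_iff by simp
qed

lemma solution_AND_n_has_all_lits: "fitness n (AND_n n) X = 0 \<Longrightarrow> missing_lits n X = {}"
  using solution_contains_relevant_variable[of n "AND_n n" X "replicate n True" _ False]
  by (fastforce simp: missing_lits_def AND_n_def)

lemma solution_OR_n_has_all_lits: "fitness n (OR_n n) X = 0 \<Longrightarrow> missing_lits n X = {}"
  using solution_contains_relevant_variable[of n "OR_n n" X "replicate n False" _ True]
  by (fastforce simp: missing_lits_def OR_n_def)

theorem theorem3:
  shows "\<exists>c>0. \<exists>N. \<forall>n\<ge>N. \<forall>size_limit\<ge>n.
           expected_runtime n size_limit (AND_n n) \<ge> ennreal (c * real n * ln (real n)) \<and>
           expected_runtime n size_limit (OR_n n) \<ge> ennreal (c * real n * ln (real n))"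
proof (intro exI[of _ "1/2"] exI[of _ 1] allI impI conjI)
  fix n size_limit :: nat
  assume "1 \<le> n"
  then have n: "0 < n"
    by simp
  have "ln (real n) \<le> ln (real n + 1)"
    using n by simp
  also have "\<dots> \<le> harm n"
    by (rule ln_le_harm)
  finally have bound: "ennreal (1/2 * real n * ln (real n)) \<le> ennreal (real n * harm n / 2)"
    by (intro ennreal_leI) (simp add: mult_left_mono)
  show "ennreal (1/2 * real n * ln (real n)) \<le> expected_runtime n size_limit (AND_n n)"
    using bound expected_runtime_ge_half_harm[OF n solution_AND_n_has_all_lits] by (rule order_trans)
  show "ennreal (1/2 * real n * ln (real n)) \<le> expected_runtime n size_limit (OR_n n)"
    using bound expected_runtime_ge_half_harm[OF n solution_OR_n_has_all_lits] by (rule order_trans)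
qed simp

end
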